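(* Let $G=(V,E)$ be a graph and $g:V\to[0,r]$ a function such that $VS_g(x,y)\le v$ for all $x,y\in V$. Let $M$ be a maximal matching in the violation graph $B_{2v/3,g}$ (each edge $(x,y)\in M$ oriented so that $g(x)<g(y)$). Obtain $h$ from $g$ by setting, for every $(x,y)\in M$, $h(x)=g(x)+v/3$ and $h(y)=g(y)-v/3$, and $h(z)=g(z)$ for unmatched $z$. Then $VS_h(x,y)\le 2v/3$ for all $x,y\in V$.
   Context: $\mathrm{dist}_G$ is the shortest-path distance. For $f:V\to\mathbb{R}$, the violation score is $VS_f(x,y)=|f(x)-f(y)|-\mathrm{dist}_G(x,y)$ if this quantity is positive and $0$ otherwise. For $\tau\ge0$, the violation graph $B_{\tau,f}$ is the directed graph on $V$ with edge set $\{(x,y): VS_f(x,y)>\tau \text{ and } f(x)<f(y)\}$; a matching in it means a matching in its underlying undirected graph. *)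

theory Defs
  imports Main "HOL-Library.Extended_Nat"
begin

text \<open>Undirected graph: vertex set V, symmetric edge set E \<subseteq> V \<times> V.
  walk E n x y: there is a walk with n edges from x to y.\<close>

inductive walk :: "('a \<times> 'a) set \<Rightarrow> nat \<Rightarrow> 'a \<Rightarrow> 'a \<Rightarrow> bool" for E where
  walk0: "walk E 0 x x"
| walkS: "(x, y) \<in> E \<Longrightarrow> walk E n y z \<Longrightarrow> walk E (Suc n) x z"

text \<open>Shortest-path distance; infinity if no path exists.\<close>
definition dist_G :: "('a \<times> 'a) set \<Rightarrow> 'a \<Rightarrow> 'a \<Rightarrow> enat" where
  "dist_G E x y = (INF n \<in> {n. walk E n x y}. enat n)"

definition VS :: "('a \<times> 'a) set \<Rightarrow> ('a \<Rightarrow> real) \<Rightarrow> 'a \<Rightarrow> 'a \<Rightarrow> real" where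
  "VS E f x y = (case dist_G E x y of
       enat d \<Rightarrow> max 0 (\<bar>f x - f y\<bar> - real d)
     | \<infinity> \<Rightarrow> 0)"

definition viol_graph :: "'a set \<Rightarrow> ('a \<times> 'a) set \<Rightarrow> real \<Rightarrow> ('a \<Rightarrow> real) \<Rightarrow> ('a \<times> 'a) set" where
  "viol_graph V E tau f = {(x, y). x \<in> V \<and> y \<in> V \<and> VS E f x y > tau \<and> f x < f y}"

definition is_matching :: "('a \<times> 'a) set \<Rightarrow> ('a \<times> 'a) set \<Rightarrow> bool" where
  "is_matching B M \<longleftrightarrow> M \<subseteq> B \<and>
     (\<forall>e1\<in>M. \<forall>e2\<in>M. e1 \<noteq> e2 \<longrightarrow> {fst e1, snd e1} \<inter> {fst e2, snd e2} = {})"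

definition maximal_matching :: "('a \<times> 'a) set \<Rightarrow> ('a \<times> 'a) set \<Rightarrow> bool" where
  "maximal_matching B M \<longleftrightarrow> is_matching B M \<and> \<not> (\<exists>M'. M \<subset> M' \<and> is_matching B M')"

end

theory Submission
  imports Defs
begin

text \<open>Fix a walk \<open>x \<leadsto> y\<close> of length \<open>n\<close>; it suffices to show \<open>h y - h x \<le> 2v/3 + n\<close>.
  Every vertex \<open>y\<close> can be joined by a walk of length \<open>k\<close> to a vertex \<open>c\<close> with
  \<open>h y + k \<le> g c\<close>, with \<open>v/3\<close> to spare if \<open>y\<close> is matched: for the lower end of a matching edge
  take its partner, whose \<open>g\<close>-value exceeds \<open>g y\<close> by more than \<open>2v/3 + k\<close>; otherwise take
  \<open>c = y\<close>. Dually on the side of \<open>x\<close>. Gluing the three walks and using \<open>VS\<^sub>g \<le> v\<close> gives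
  \<open>h y - h x \<le> v + n\<close> minus \<open>v/3\<close> per matched end. If neither end is matched, then \<open>h = g\<close>
  there and maximality of the matching yields \<open>g y - g x \<le> 2v/3 + n\<close>.\<close>

lemma walk_append: "walk E n x y \<Longrightarrow> walk E m y z \<Longrightarrow> walk E (n + m) x z"
  by (induction rule: walk.induct) (auto intro: walk.walkS)

lemma walk_reverse:
  assumes "sym E"
  shows "walk E n x y \<Longrightarrow> walk E n y x"
proof (induction rule: walk.induct)
  case (walk0 x)
  show ?case by (rule walk.walk0)
next
  case (walkS x y n z)
  have "walk E 1 y x"
    using walkS.hyps(1) assms by (auto intro: walk.intros symD)
  with walkS.IH show ?case
    using walk_append by fastforce
qed

lemma dist_G_le_walk: "walk E n x y \<Longrightarrow> dist_G E x y \<le> enat n"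
  unfolding dist_G_def by (rule INF_lower) simp

lemma walk_dist_G:
  assumes "dist_G E x y = enat d"
  shows "walk E d x y"
proof -
  have ne: "enat ` {n. walk E n x y} \<noteq> {}"
    using assms by (auto simp: dist_G_def Inf_enat_def split: if_splits)
  have "dist_G E x y = (LEAST e. e \<in> enat ` {n. walk E n x y})"
    using ne by (auto simp: dist_G_def Inf_enat_def)
  also have "\<dots> \<in> enat ` {n. walk E n x y}"
    using ne by (auto intro: LeastI)
  finally show ?thesis
    using assms by auto
qed

lemma VS_nonneg: "0 \<le> VS E f x y"
  by (auto simp: VS_def split: enat.split)

lemma VS_le_iff_walks:
  assumes "0 \<le> t"
  shows "VS E f x y \<le> t \<longleftrightarrow> (\<forall>n. walk E n x y \<longrightarrow> \<bar>f x - f y\<bar> \<le> t + n)"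
proof (cases "dist_G E x y")
  case (enat d)
  have VS_eq: "VS E f x y = max 0 (\<bar>f x - f y\<bar> - d)"
    using enat by (simp add: VS_def)
  have d_min: "d \<le> n" if "walk E n x y" for n
    using dist_G_le_walk[OF that] enat by simp
  have "(\<forall>n. walk E n x y \<longrightarrow> \<bar>f x - f y\<bar> \<le> t + n) \<longleftrightarrow> \<bar>f x - f y\<bar> \<le> t + d"
  proof
    assume "\<forall>n. walk E n x y \<longrightarrow> \<bar>f x - f y\<bar> \<le> t + n"
    then show "\<bar>f x - f y\<bar> \<le> t + d"
      using walk_dist_G[OF enat] by blast
  next
    assume "\<bar>f x - f y\<bar> \<le> t + d"
    then show "\<forall>n. walk E n x y \<longrightarrow> \<bar>f x - f y\<bar> \<le> t + n"
      using d_min by (smt (verit) of_nat_le_iff)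
  qed
  then show ?thesis
    using VS_eq assms by auto
next
  case infinity
  then have "\<not> walk E n x y" for n
    using dist_G_le_walk by fastforce
  with infinity assms show ?thesis
    by (simp add: VS_def)
qed

lemma is_matching_insert:
  assumes "is_matching B M" "(x, y) \<in> B"
    and "\<forall>(p, q)\<in>M. x \<noteq> p \<and> x \<noteq> q" "\<forall>(p, q)\<in>M. y \<noteq> p \<and> y \<noteq> q"
  shows "is_matching B (insert (x, y) M)"
  unfolding is_matching_def
proof (intro conjI ballI impI)
  show "insert (x, y) M \<subseteq> B"
    using assms(1,2) by (simp add: is_matching_def)
next
  fix e1 e2 assume e: "e1 \<in> insert (x, y) M" "e2 \<in> insert (x, y) M" "e1 \<noteq> e2"
  have fresh: "{x, y} \<inter> {fst e, snd e} = {}" if "e \<in> M" for e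
    using that assms(3,4) by (cases e) auto
  show "{fst e1, snd e1} \<inter> {fst e2, snd e2} = {}"
    using e assms(1) fresh[of e1] fresh[of e2] unfolding is_matching_def by auto
qed

locale matching_repair =
  fixes V :: "'a set" and E :: "('a \<times> 'a) set" and g h :: "'a \<Rightarrow> real"
    and v :: real and M :: "('a \<times> 'a) set"
  assumes v_nonneg: "0 \<le> v"
    and VS_g_le: "\<forall>x\<in>V. \<forall>y\<in>V. VS E g x y \<le> v"
    and maximal: "maximal_matching (viol_graph V E (2 * v / 3) g) M"
    and h_matched: "\<forall>(x, y)\<in>M. h x = g x + v / 3 \<and> h y = g y - v / 3"
    and h_unmatched: "\<forall>z\<in>V. (\<forall>(x, y)\<in>M. z \<noteq> x \<and> z \<noteq> y) \<longrightarrow> h z = g z"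
begin

definition unmatched :: "'a \<Rightarrow> bool" where
  "unmatched z \<longleftrightarrow> (\<forall>(x, y)\<in>M. z \<noteq> x \<and> z \<noteq> y)"

lemma g_walk_bound:
  assumes "x \<in> V" "y \<in> V" "walk E n x y"
  shows "g y - g x \<le> v + n"
  using VS_g_le assms v_nonneg VS_le_iff_walks[of v E g x y] by fastforce

lemma matching_edge_gap:
  assumes "(a, b) \<in> M"
  shows "a \<in> V \<and> b \<in> V \<and> (\<exists>m. walk E m a b \<and> 2 * v / 3 + m < g b - g a)"
proof -
  have "(a, b) \<in> viol_graph V E (2 * v / 3) g"
    using maximal assms by (auto simp: maximal_matching_def is_matching_def)
  then have "a \<in> V" "b \<in> V" "\<not> VS E g a b \<le> 2 * v / 3" "g a < g b"
    by (auto simp: viol_graph_def)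
  then show ?thesis
    using VS_le_iff_walks[of "2 * v / 3" E g a b] v_nonneg by auto
qed

lemma unmatched_walk_bound:
  assumes "x \<in> V" "y \<in> V" "walk E n x y" "unmatched x" "unmatched y"
  shows "g y - g x \<le> 2 * v / 3 + n"
proof (rule ccontr)
  let ?B = "viol_graph V E (2 * v / 3) g"
  assume "\<not> ?thesis"
  then have gap: "2 * v / 3 + n < g y - g x" by simp
  then have "\<not> VS E g x y \<le> 2 * v / 3"
    using VS_le_iff_walks[of "2 * v / 3" E g x y] assms(3) v_nonneg by fastforce
  moreover have "g x < g y"
    using gap v_nonneg by linarith
  ultimately have xy_viol: "(x, y) \<in> ?B"
    using assms(1,2) by (simp add: viol_graph_def)
  have "is_matching ?B M"
    using maximal by (simp add: maximal_matching_def)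
  from is_matching_insert[OF this xy_viol] assms(4,5)
  have "is_matching ?B (insert (x, y) M)"
    unfolding unmatched_def by simp
  moreover have "M \<subset> insert (x, y) M"
    using assms(4) by (auto simp: unmatched_def)
  ultimately show False
    using maximal by (auto simp: maximal_matching_def)
qed

lemma h_upper_witness:
  assumes "y \<in> V"
  obtains c k where "c \<in> V" "walk E k y c"
    "h y + k + (if unmatched y then 0 else v / 3) \<le> g c"
proof (cases "\<exists>c. (y, c) \<in> M")
  case True
  then obtain c where yc: "(y, c) \<in> M" by blast
  with matching_edge_gap obtain k where "c \<in> V" "walk E k y c" "2 * v / 3 + k < g c - g y"
    by blast
  moreover have "h y = g y + v / 3" "\<not> unmatched y"
    using yc h_matched by (auto simp: unmatched_def)
  ultimately show ?thesis
    using that by fastforce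
next
  case False
  have le: "h y + (if unmatched y then 0 else v / 3) \<le> g y"
  proof (cases "unmatched y")
    case True
    then show ?thesis using h_unmatched assms by (simp add: unmatched_def)
  next
    case matched: False
    with False obtain a where "(a, y) \<in> M" by (auto simp: unmatched_def)
    then show ?thesis using h_matched matched by auto
  qed
  show ?thesis
    by (rule that[of y 0]) (use assms le walk.walk0 in auto)
qed

lemma h_lower_witness:
  assumes "x \<in> V"
  obtains a m where "a \<in> V" "walk E m a x"
    "g a + m + (if unmatched x then 0 else v / 3) \<le> h x"
proof (cases "\<exists>a. (a, x) \<in> M")
  case True
  then obtain a where ax: "(a, x) \<in> M" by blast
  with matching_edge_gap obtain m where "a \<in> V" "walk E m a x" "2 * v / 3 + m < g x - g a"
    by blast
  moreover have "h x = g x - v / 3" "\<not> unmatched x"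
    using ax h_matched by (auto simp: unmatched_def)
  ultimately show ?thesis
    using that by fastforce
next
  case False
  have le: "g x + (if unmatched x then 0 else v / 3) \<le> h x"
  proof (cases "unmatched x")
    case True
    then show ?thesis using h_unmatched assms by (simp add: unmatched_def)
  next
    case matched: False
    with False obtain b where "(x, b) \<in> M" by (auto simp: unmatched_def)
    then show ?thesis using h_matched matched by auto
  qed
  show ?thesis
    by (rule that[of x 0]) (use assms le walk.walk0 in auto)
qed

lemma h_walk_bound:
  assumes "x \<in> V" "y \<in> V" "walk E n x y"
  shows "h y - h x \<le> 2 * v / 3 + n"
proof (cases "unmatched x \<and> unmatched y")
  case True
  then show ?thesis
    using unmatched_walk_bound[OF assms] h_unmatched assms(1,2) by (simp add: unmatched_def)
next
  case False
  obtain a m where a: "a \<in> V" "walk E m a x"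
    and ha: "g a + m + (if unmatched x then 0 else v / 3) \<le> h x"
    using h_lower_witness[OF assms(1)] .
  obtain c k where c: "c \<in> V" "walk E k y c"
    and hc: "h y + k + (if unmatched y then 0 else v / 3) \<le> g c"
    using h_upper_witness[OF assms(2)] .
  have "walk E (m + n + k) a c"
    using walk_append[OF walk_append[OF a(2) assms(3)] c(2)] .
  then have "g c - g a \<le> v + (m + n + k)"
    using g_walk_bound a(1) c(1) by blast
  moreover have "v / 3 \<le> (if unmatched x then 0 else v / 3) + (if unmatched y then 0 else v / 3)"
    using False v_nonneg by auto
  ultimately show ?thesis
    using ha hc by linarith
qed

end

theorem claim2p3:
  fixes V :: "'a set" and E :: "('a \<times> 'a) set" and g h :: "'a \<Rightarrow> real"
    and r v :: real and M :: "('a \<times> 'a) set"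
  assumes "finite V" and "E \<subseteq> V \<times> V" and "sym E"
    and "\<forall>x\<in>V. 0 \<le> g x \<and> g x \<le> r"
    and "\<forall>x\<in>V. \<forall>y\<in>V. VS E g x y \<le> v"
    and "maximal_matching (viol_graph V E (2 * v / 3) g) M"
    and "\<forall>(x, y)\<in>M. h x = g x + v / 3 \<and> h y = g y - v / 3"
    and "\<forall>z\<in>V. (\<forall>(x, y)\<in>M. z \<noteq> x \<and> z \<noteq> y) \<longrightarrow> h z = g z"
  shows "\<forall>x\<in>V. \<forall>y\<in>V. VS E h x y \<le> 2 * v / 3"
proof (intro ballI)
  fix x y assume xy: "x \<in> V" "y \<in> V"
  have "0 \<le> v"
    using VS_nonneg[of E g x x] assms(5) xy(1) by fastforce
  then interpret matching_repair V E g h v M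
    using assms(5-8) by unfold_locales
  have "\<bar>h x - h y\<bar> \<le> 2 * v / 3 + n" if "walk E n x y" for n
    using h_walk_bound[OF xy that] h_walk_bound[OF xy(2,1) walk_reverse[OF assms(3) that]]
    by linarith
  then show "VS E h x y \<le> 2 * v / 3"
    using VS_le_iff_walks[of "2 * v / 3" E h x y] v_nonneg by simp
qed

end
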